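(* Let $n\ge 2$ and let $\overrightarrow{K_{1,n}}$ be an orientation of the star $K_{1,n}$. Then $\overrightarrow{K_{1,n}}$ is $\{1,2\}$-antimagic if and only if $n=2$ and its center is neither a source nor a sink.
   Context: An oriented graph $\overrightarrow{G}$ is a directed graph obtained from a simple undirected graph by giving each edge one direction. For vertices $u,v$, $d(u,v)$ is the length of a shortest directed path from $u$ to $v$ ($d(u,u)=0$, and $d(u,v)=\infty$ if there is no such path). Let $\partial=\max\{d(u,v)<\infty : u,v\in V(\overrightarrow{G})\}$. A distance set is a nonempty $D\subseteq\{0,1,\dots,\partial\}$. The $D$-neighborhood of $u$ is $N_D(u)=\{v : d(u,v)\in D\}$. For a bijection $f:V(\overrightarrow{G})\to\{1,\dots,|V(\overrightarrow{G})|\}$, the $D$-weight of $u$ is $\omega_D(u)=\sum_{v\in N_D(u)} f(v)$ (empty sum $=0$). $\overrightarrow{G}$ is $D$-antimagic if $D\subseteq\{0,\dots,\partial\}$ (so $\{1,2\}$-antimagic requires $\partial\ge 2$) and there is such a bijection $f$ with all $D$-weights pairwise distinct. The center of $\overrightarrow{K_{1,n}}$ is its vertex of degree $n$; a source is a vertex of in-degree $0$ and a sink a vertex of out-degree $0$. *)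

theory Defs
  imports Main
begin

definition oriented_graph :: "'a set \<Rightarrow> ('a \<times> 'a) set \<Rightarrow> bool" where
  "oriented_graph V A \<longleftrightarrow> finite V \<and> A \<subseteq> V \<times> V \<and>
     (\<forall>u v. (u, v) \<in> A \<longrightarrow> u \<noteq> v \<and> (v, u) \<notin> A)"

definition dist_is :: "('a \<times> 'a) set \<Rightarrow> 'a \<Rightarrow> 'a \<Rightarrow> nat \<Rightarrow> bool" where
  "dist_is A u v k \<longleftrightarrow> (u, v) \<in> A ^^ k \<and> (\<forall>j<k. (u, v) \<notin> A ^^ j)"

definition max_fin_dist :: "'a set \<Rightarrow> ('a \<times> 'a) set \<Rightarrow> nat" where
  "max_fin_dist V A = Max {k. \<exists>u\<in>V. \<exists>v\<in>V. dist_is A u v k}"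

definition D_nbhd :: "'a set \<Rightarrow> ('a \<times> 'a) set \<Rightarrow> nat set \<Rightarrow> 'a \<Rightarrow> 'a set" where
  "D_nbhd V A D u = {v \<in> V. \<exists>k\<in>D. dist_is A u v k}"

definition D_weight :: "'a set \<Rightarrow> ('a \<times> 'a) set \<Rightarrow> nat set \<Rightarrow> ('a \<Rightarrow> nat) \<Rightarrow> 'a \<Rightarrow> nat" where
  "D_weight V A D f u = (\<Sum>v\<in>D_nbhd V A D u. f v)"

definition D_antimagic :: "'a set \<Rightarrow> ('a \<times> 'a) set \<Rightarrow> nat set \<Rightarrow> bool" where
  "D_antimagic V A D \<longleftrightarrow> D \<noteq> {} \<and> D \<subseteq> {0..max_fin_dist V A} \<and>
     (\<exists>f. bij_betw f V {1..card V} \<and> inj_on (D_weight V A D f) V)"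

definition oriented_star :: "'a set \<Rightarrow> ('a \<times> 'a) set \<Rightarrow> 'a \<Rightarrow> nat \<Rightarrow> bool" where
  "oriented_star V A c n \<longleftrightarrow> oriented_graph V A \<and> c \<in> V \<and> card V = n + 1 \<and>
     A \<subseteq> ({c} \<times> (V - {c})) \<union> ((V - {c}) \<times> {c}) \<and>
     (\<forall>v \<in> V - {c}. (c, v) \<in> A \<or> (v, c) \<in> A)"

definition is_source :: "('a \<times> 'a) set \<Rightarrow> 'a \<Rightarrow> bool" where
  "is_source A u \<longleftrightarrow> (\<forall>w. (w, u) \<notin> A)"

definition is_sink :: "('a \<times> 'a) set \<Rightarrow> 'a \<Rightarrow> bool" where
  "is_sink A u \<longleftrightarrow> (\<forall>w. (u, w) \<notin> A)"

end

theory Submission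
  imports Defs
begin

text \<open>In an oriented star every directed walk of length two passes through the centre c
  and no walk of length three exists. Hence the {1,2}-neighbourhood of a leaf x is empty when
  c \<rightarrow> x, and consists of c and the out-neighbours of c when x \<rightarrow> c. Distinct weights therefore
  allow at most one leaf of each kind, i.e. n \<le> 2, and \<partial> \<ge> 2 forces the centre to have an
  in- and an out-neighbour. Conversely, for the path i \<rightarrow> c \<rightarrow> j the labels f c = 1, f i = 2,
  f j = 3 give the weights 3, 4 and 0.\<close>

lemma oriented_star_arcE:
  assumes "oriented_star V A c n" "(u, v) \<in> A"
  obtains "u = c" "v \<in> V - {c}" | "v = c" "u \<in> V - {c}"
  using assms unfolding oriented_star_def by blast

lemma oriented_star_arc_antisym:
  assumes "oriented_star V A c n" "(u, v) \<in> A"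
  shows "(v, u) \<notin> A" "u \<noteq> v"
  using assms unfolding oriented_star_def oriented_graph_def by blast+

lemma oriented_star_relpow_2:
  assumes "oriented_star V A c n"
  shows "A ^^ 2 = {(x, z). (x, c) \<in> A \<and> (c, z) \<in> A}"
proof -
  have "(x, c) \<in> A \<and> (c, z) \<in> A" if "(x, y) \<in> A" "(y, z) \<in> A" for x y z
    using that oriented_star_arcE[OF assms] oriented_star_arc_antisym[OF assms] by metis
  then show ?thesis by (auto simp: numeral_2_eq_2)
qed

lemma oriented_star_relpow_ge_3:
  assumes "oriented_star V A c n" "k \<ge> 3"
  shows "A ^^ k = {}"
proof -
  have "(x, z) \<notin> A ^^ 2 O A" for x z
  proof
    assume "(x, z) \<in> A ^^ 2 O A"
    then obtain y where "(c, y) \<in> A" "(y, z) \<in> A"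
      by (auto simp: oriented_star_relpow_2[OF assms(1)])
    then show False
      using oriented_star_arc_antisym[OF assms(1)] by (metis oriented_star_arcE[OF assms(1)])
  qed
  then have "A ^^ 2 O A = {}" by auto
  then have "A ^^ 3 = {}"
    by (metis numeral_3_eq_3 numeral_2_eq_2 relpow.simps(2))
  moreover have "A ^^ k = A ^^ (k - 3) O A ^^ 3"
    using assms(2) by (metis le_add_diff_inverse2 relpow_add)
  ultimately show ?thesis by simp
qed

lemma oriented_star_dist_is_1:
  assumes "oriented_star V A c n"
  shows "dist_is A u v 1 \<longleftrightarrow> (u, v) \<in> A"
  using oriented_star_arc_antisym[OF assms] unfolding dist_is_def by auto

lemma oriented_star_dist_is_2:
  assumes "oriented_star V A c n"
  shows "dist_is A u v 2 \<longleftrightarrow> (u, c) \<in> A \<and> (c, v) \<in> A"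
proof -
  have "j < 2 \<longleftrightarrow> j = 0 \<or> j = 1" for j :: nat by auto
  then have "dist_is A u v 2 \<longleftrightarrow> (u, v) \<in> A ^^ 2 \<and> u \<noteq> v \<and> (u, v) \<notin> A"
    unfolding dist_is_def by auto
  then show ?thesis
    using oriented_star_relpow_2[OF assms] oriented_star_arcE[OF assms]
      oriented_star_arc_antisym[OF assms]
    by blast
qed

lemma oriented_star_max_fin_dist_ge_2_iff:
  assumes "oriented_star V A c n"
  shows "2 \<le> max_fin_dist V A \<longleftrightarrow> \<not> is_source A c \<and> \<not> is_sink A c"
proof -
  let ?S = "{k. \<exists>u\<in>V. \<exists>v\<in>V. dist_is A u v k}"
  have S_sub: "?S \<subseteq> {0, 1, 2}"
  proof
    fix k
    assume "k \<in> ?S"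
    then have "A ^^ k \<noteq> {}"
      unfolding dist_is_def by blast
    then have "\<not> k \<ge> 3"
      using oriented_star_relpow_ge_3[OF assms] by blast
    then show "k \<in> {0, 1, 2}" by auto
  qed
  then have "finite ?S" by (rule finite_subset) simp
  moreover have "0 \<in> ?S"
    using assms unfolding oriented_star_def dist_is_def by auto
  ultimately have Max_S: "Max ?S \<in> ?S" "\<forall>k\<in>?S. k \<le> Max ?S"
    using Max_in[of ?S] Max_ge[of ?S] by blast+
  have "2 \<le> Max ?S \<longleftrightarrow> 2 \<in> ?S"
  proof
    assume "2 \<le> Max ?S"
    moreover have "Max ?S \<in> {0, 1, 2}"
      using Max_S(1) S_sub by blast
    ultimately have "Max ?S = 2" by auto
    then show "2 \<in> ?S"
      using Max_S(1) by simp
  qed (use Max_S(2) in blast)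
  also have "\<dots> \<longleftrightarrow> (\<exists>u v. (u, c) \<in> A \<and> (c, v) \<in> A)"
  proof
    assume "2 \<in> ?S"
    then show "\<exists>u v. (u, c) \<in> A \<and> (c, v) \<in> A"
      using oriented_star_dist_is_2[OF assms] by blast
  next
    assume "\<exists>u v. (u, c) \<in> A \<and> (c, v) \<in> A"
    then obtain u v where uc: "(u, c) \<in> A" and cv: "(c, v) \<in> A" by blast
    have "u \<in> V" "v \<in> V"
      using uc cv assms unfolding oriented_star_def oriented_graph_def by auto
    then show "2 \<in> ?S"
      using uc cv oriented_star_dist_is_2[OF assms] by blast
  qed
  finally show ?thesis
    unfolding max_fin_dist_def is_source_def is_sink_def by blast
qed

lemma oriented_star_D_nbhd_12:
  assumes "oriented_star V A c n"
  shows "D_nbhd V A {1, 2} u = {v \<in> V. (u, v) \<in> A \<or> (u, c) \<in> A \<and> (c, v) \<in> A}"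
  unfolding D_nbhd_def
  using oriented_star_dist_is_1[OF assms] oriented_star_dist_is_2[OF assms] by auto

lemma oriented_star_D_nbhd_12_leaf:
  assumes "oriented_star V A c n" "x \<in> V - {c}"
  shows "D_nbhd V A {1, 2} x \<in> {{}, insert c {w \<in> V. (c, w) \<in> A}}"
proof -
  have "(c, x) \<in> A \<or> (x, c) \<in> A"
    using assms unfolding oriented_star_def by blast
  moreover have "c \<in> V"
    using assms(1) unfolding oriented_star_def by blast
  ultimately show ?thesis
    unfolding oriented_star_D_nbhd_12[OF assms(1)]
    using assms oriented_star_arcE[OF assms(1)] oriented_star_arc_antisym[OF assms(1)]
    by auto
qed

lemma oriented_star_le_2_if_inj_D_weight_12:
  assumes "oriented_star V A c n" "inj_on (D_weight V A {1, 2} f) V"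
  shows "n \<le> 2"
proof -
  have "inj_on (D_nbhd V A {1, 2}) (V - {c})"
    using assms(2) by (auto simp: inj_on_def D_weight_def)
  then have "card (V - {c}) = card (D_nbhd V A {1, 2} ` (V - {c}))"
    by (simp add: card_image)
  also have "\<dots> \<le> card {{}, insert c {w \<in> V. (c, w) \<in> A}}"
    using oriented_star_D_nbhd_12_leaf[OF assms(1)] by (intro card_mono) auto
  also have "\<dots> \<le> 2"
    by (simp add: card_insert_if)
  finally show ?thesis
    using assms(1) unfolding oriented_star_def oriented_graph_def by simp
qed

lemma oriented_star_path_D_antimagic_12:
  assumes st: "oriented_star V A c 2" and ic: "(i, c) \<in> A" and co: "(c, j) \<in> A"
  shows "D_antimagic V A {1, 2}"
proof -
  have iV: "i \<in> V - {c}" and jV: "j \<in> V - {c}"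
    using ic co by (auto elim: oriented_star_arcE[OF st])
  have i_ne_j: "i \<noteq> j"
    using oriented_star_arc_antisym(1)[OF st ic] co by auto
  have V: "V = {c, i, j}"
  proof (rule card_subset_eq[symmetric])
    show "finite V" "{c, i, j} \<subseteq> V" "card {c, i, j} = card V"
      using st iV jV i_ne_j unfolding oriented_star_def oriented_graph_def by auto
  qed
  define f where "f x = (if x = c then 1 else if x = i then 2 else 3 :: nat)" for x
  have "bij_betw f V {1..card V}"
  proof -
    have "{1..card V} = {1, 2, 3}"
      using iV jV i_ne_j by (auto simp: V)
    then show ?thesis
      unfolding V bij_betw_def inj_on_def f_def using iV jV i_ne_j by auto
  qed
  moreover have "inj_on (D_weight V A {1, 2} f) V"
  proof -
    have non_arcs: "(c, i) \<notin> A" "(j, c) \<notin> A" "(i, j) \<notin> A" "(j, i) \<notin> A"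
      using oriented_star_arc_antisym[OF st] oriented_star_arcE[OF st] ic co iV jV by blast+
    have "D_nbhd V A {1, 2} c = {j}" "D_nbhd V A {1, 2} i = {c, j}" "D_nbhd V A {1, 2} j = {}"
      unfolding oriented_star_D_nbhd_12[OF st]
      using non_arcs ic co oriented_star_arc_antisym(2)[OF st] by (auto simp: V)
    then have "D_weight V A {1, 2} f c = 3" "D_weight V A {1, 2} f i = 4"
      "D_weight V A {1, 2} f j = 0"
      unfolding D_weight_def f_def using iV jV i_ne_j by auto
    then show ?thesis unfolding V inj_on_def by auto
  qed
  moreover have "2 \<le> max_fin_dist V A"
    using oriented_star_max_fin_dist_ge_2_iff[OF st] ic co
    unfolding is_source_def is_sink_def by blast
  ultimately show ?thesis
    unfolding D_antimagic_def by auto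
qed

theorem mainTheorem5:
  fixes V :: "'a set" and A :: "('a \<times> 'a) set" and c :: 'a and n :: nat
  assumes "n \<ge> 2" and "oriented_star V A c n"
  shows "D_antimagic V A {1, 2} \<longleftrightarrow> n = 2 \<and> \<not> is_source A c \<and> \<not> is_sink A c"
proof
  assume "D_antimagic V A {1, 2}"
  then obtain f where "inj_on (D_weight V A {1, 2} f) V" and "2 \<le> max_fin_dist V A"
    unfolding D_antimagic_def by auto
  then show "n = 2 \<and> \<not> is_source A c \<and> \<not> is_sink A c"
    using assms oriented_star_le_2_if_inj_D_weight_12[OF assms(2)]
      oriented_star_max_fin_dist_ge_2_iff[OF assms(2)] by simp
next
  assume "n = 2 \<and> \<not> is_source A c \<and> \<not> is_sink A c"
  then obtain i j where "(i, c) \<in> A" "(c, j) \<in> A" "oriented_star V A c 2"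
    using assms(2) unfolding is_source_def is_sink_def by blast
  then show "D_antimagic V A {1, 2}"
    by (rule oriented_star_path_D_antimagic_12[rotated])
qed

end
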